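(* Let $q$ be a prime power and $n$ a positive integer, and let $U,V$ be two distinct $\mathbb{F}_q$-subspaces of $\mathbb{F}_{q^n}$ such that $U\cap V=\{0\}$ and $\dim(U\cap\alpha V)\leq 1$ for every $\alpha\in\mathbb{F}_{q^n}^*$. If $$\mathbb{F}_q+(U+V)+UV=\mathbb{F}_q\oplus(U+V)\oplus UV,$$ then $\dim\big((\mathbb{F}_q+U)\cap\alpha(\mathbb{F}_q+V)\big)\leq 1$ for every $\alpha\in\mathbb{F}_{q^n}^*$.
   Context: All subspaces are $\mathbb{F}_q$-subspaces of $\mathbb{F}_{q^n}$, with $\mathbb{F}_q\subseteq\mathbb{F}_{q^n}$ the prime-power subfield. For subspaces $U,V$: $U+V=\{u+v\mid u\in U,v\in V\}$, $UV$ is the $\mathbb{F}_q$-span of $\{uv\mid u\in U,v\in V\}$, and $\oplus$ denotes that the sum is direct. *)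

theory Defs
  imports "HOL-Algebra.Algebra"
begin

definition (in ring) span_set :: "'a set \<Rightarrow> 'a set \<Rightarrow> 'a set" where
  "span_set K S = {x. \<exists>us. set us \<subseteq> S \<and> x \<in> Span K us}"

definition (in ring) prod_space :: "'a set \<Rightarrow> 'a set \<Rightarrow> 'a set \<Rightarrow> 'a set" where
  "prod_space K U V = span_set K {u \<otimes> v | u v. u \<in> U \<and> v \<in> V}"

definition (in ring) scale_set :: "'a \<Rightarrow> 'a set \<Rightarrow> 'a set" where
  "scale_set \<alpha> V = (\<lambda>v. \<alpha> \<otimes> v) ` V"

definition (in ring) direct_sum3 :: "'a set \<Rightarrow> 'a set \<Rightarrow> 'a set \<Rightarrow> bool" where
  "direct_sum3 A B C \<longleftrightarrow>
     (\<forall>a\<in>A. \<forall>b\<in>B. \<forall>c\<in>C. a \<oplus> b \<oplus> c = \<zero> \<longrightarrow> a = \<zero> \<and> b = \<zero> \<and> c = \<zero>)"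

end

theory Submission
  imports Defs
begin

text \<open>Put \<open>S = (K + U) \<inter> \<alpha>(K + V)\<close>. If \<open>S \<subseteq> U \<inter> \<alpha>V\<close> the hypothesis applies. Otherwise
  pick \<open>x\<^sub>0 = a\<^sub>0 + u\<^sub>0 = \<alpha>(b\<^sub>0 + v\<^sub>0)\<close> in \<open>S\<close> with \<open>(a\<^sub>0, b\<^sub>0) \<noteq> (0, 0)\<close>. For any
  \<open>y = a + u = \<alpha>(b + v)\<close> in \<open>S\<close> we have \<open>(a\<^sub>0 + u\<^sub>0)(b + v) = (a + u)(b\<^sub>0 + v\<^sub>0)\<close>, and the
  difference splits as
  \<open>(a\<^sub>0b - ab\<^sub>0) + ((bu\<^sub>0 - b\<^sub>0u) + (a\<^sub>0v - av\<^sub>0)) + (u\<^sub>0v - uv\<^sub>0) \<in> K \<oplus> (U + V) \<oplus> UV\<close>.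
  By directness and \<open>U \<inter> V = 0\<close> we get \<open>a\<^sub>0b = ab\<^sub>0\<close>, \<open>b\<^sub>0u = bu\<^sub>0\<close>, \<open>a\<^sub>0v = av\<^sub>0\<close>,
  which make \<open>y\<close> a \<open>K\<close>-multiple of \<open>x\<^sub>0\<close>.\<close>

context ring
begin

lemma set_add_mem_iff: "x \<in> A <+> B \<longleftrightarrow> (\<exists>a\<in>A. \<exists>b\<in>B. x = a \<oplus> b)"
  by (auto simp: set_add_def')

lemma subalgebra_props:
  assumes "subalgebra K V R"
  shows "V \<subseteq> carrier R" and "\<zero> \<in> V"
    and "\<And>x y. x \<in> V \<Longrightarrow> y \<in> V \<Longrightarrow> x \<oplus> y \<in> V"
    and "\<And>x. x \<in> V \<Longrightarrow> \<ominus> x \<in> V"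
    and "\<And>k x. k \<in> K \<Longrightarrow> x \<in> V \<Longrightarrow> k \<otimes> x \<in> V"
proof -
  interpret additive_subgroup V R
    using assms unfolding subalgebra_def additive_subgroup_def by blast
  show "V \<subseteq> carrier R" "\<zero> \<in> V" "\<And>x y. x \<in> V \<Longrightarrow> y \<in> V \<Longrightarrow> x \<oplus> y \<in> V"
    "\<And>x. x \<in> V \<Longrightarrow> \<ominus> x \<in> V"
    by (simp_all add: a_subset a_closed a_inv_closed)
  show "\<And>k x. k \<in> K \<Longrightarrow> x \<in> V \<Longrightarrow> k \<otimes> x \<in> V"
    using subalgebra.smult_closed[OF assms] .
qed

lemma subalgebraI:
  assumes "V \<subseteq> carrier R" and "\<zero> \<in> V"
    and "\<And>x y. x \<in> V \<Longrightarrow> y \<in> V \<Longrightarrow> x \<oplus> y \<in> V"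
    and "\<And>x. x \<in> V \<Longrightarrow> \<ominus> x \<in> V"
    and "\<And>k x. k \<in> K \<Longrightarrow> x \<in> V \<Longrightarrow> k \<otimes> x \<in> V"
  shows "subalgebra K V R"
  unfolding subalgebra_def subalgebra_axioms_def
  using assms by (auto intro!: add.subgroupI)

lemma subfield_is_subalgebra:
  assumes "subfield K R"
  shows "subalgebra K K R"
  using subringE[OF subfieldE(1)[OF assms]]
  unfolding subalgebra_def subalgebra_axioms_def
  by (auto intro!: add.subgroupI)

lemma subalgebra_set_add:
  fixes A B :: "'a set"
  assumes "K \<subseteq> carrier R" and A: "subalgebra K A R" and B: "subalgebra K B R"
  shows "subalgebra K (A <+> B) R"
proof -
  note A' = subalgebra_props[OF A] and B' = subalgebra_props[OF B]
  have "additive_subgroup (A <+> B) R"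
    using A B by (intro add_additive_subgroups) (simp_all add: subalgebra_def additive_subgroup_def)
  moreover have "k \<otimes> x \<in> A <+> B" if k: "k \<in> K" and x: "x \<in> A <+> B" for k x :: 'a
  proof -
    obtain a b where a: "a \<in> A" and b: "b \<in> B" and "x = a \<oplus> b"
      using x by (auto simp: set_add_mem_iff)
    moreover have "k \<otimes> (a \<oplus> b) = k \<otimes> a \<oplus> k \<otimes> b"
      using a b k assms(1) A'(1) B'(1) by (simp add: r_distr subset_iff)
    ultimately show ?thesis
      using A'(5)[OF k a] B'(5)[OF k b] by (auto simp: set_add_mem_iff)
  qed
  ultimately show ?thesis
    by (simp add: subalgebra_def subalgebra_axioms_def additive_subgroup_def)
qed

lemma span_set_subalgebra:
  assumes K: "subfield K R" and S: "S \<subseteq> carrier R"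
  shows "subalgebra K (span_set K S) R"
proof (rule subalgebraI)
  have carrier: "set us \<subseteq> carrier R" if "set us \<subseteq> S" for us
    using that S by blast
  show "span_set K S \<subseteq> carrier R"
    using Span_in_carrier[OF subfieldE(3)[OF K] carrier] unfolding span_set_def by blast
  show "\<zero> \<in> span_set K S"
    unfolding span_set_def by (intro CollectI exI[of _ "[]"]) simp
  show "x \<oplus> y \<in> span_set K S" if x: "x \<in> span_set K S" and y: "y \<in> span_set K S" for x y
  proof -
    obtain us vs where us: "set us \<subseteq> S" "x \<in> Span K us" and vs: "set vs \<subseteq> S" "y \<in> Span K vs"
      using x y unfolding span_set_def by blast
    have "x \<in> Span K (us @ vs)" and "y \<in> Span K (us @ vs)"
      using mono_Span_append(1)[OF K carrier carrier, of us vs]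
        mono_Span_append(2)[OF K carrier carrier, of vs us] us vs by blast+
    then have "x \<oplus> y \<in> Span K (us @ vs)"
      using Span_subgroup_props(3)[OF K carrier, of "us @ vs"] us(1) vs(1) by simp
    with us(1) vs(1) show ?thesis
      unfolding span_set_def by (intro CollectI exI[of _ "us @ vs"]) simp
  qed
  show "\<ominus> x \<in> span_set K S" if "x \<in> span_set K S" for x
    using that Span_subgroup_props(4)[OF K carrier] unfolding span_set_def by blast
  show "k \<otimes> x \<in> span_set K S" if "k \<in> K" "x \<in> span_set K S" for k x
    using that Span_smult_closed[OF K carrier] unfolding span_set_def by blast
qed

lemma subset_span_set:
  assumes K: "subfield K R" and S: "S \<subseteq> carrier R"
  shows "S \<subseteq> span_set K S"
proof
  fix x assume "x \<in> S"
  then have "set [x] \<subseteq> S" and "x \<in> Span K [x]"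
    using Span_base_incl[OF K, of "[x]"] S by auto
  then show "x \<in> span_set K S"
    unfolding span_set_def by blast
qed

lemma prod_space_subalgebra:
  assumes "subfield K R" and "U \<subseteq> carrier R" and "V \<subseteq> carrier R"
  shows "subalgebra K (prod_space K U V) R"
  unfolding prod_space_def using assms by (intro span_set_subalgebra) auto

lemma prod_space_mem:
  assumes "subfield K R" and "U \<subseteq> carrier R" and "V \<subseteq> carrier R" and "u \<in> U" and "v \<in> V"
  shows "u \<otimes> v \<in> prod_space K U V"
  unfolding prod_space_def using assms by (intro subset_span_set[THEN subsetD]) auto

lemma finite_carrier_subalgebra_finite_dimension:
  assumes K: "subfield K R" and "finite (carrier R)" and V: "subalgebra K V R"
  shows "finite_dimension K V"
proof -
  obtain xs where xs: "set xs = carrier R"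
    using finite_list[OF assms(2)] by blast
  then have "Span K xs = carrier R"
    using Span_base_incl[OF K, of xs] Span_in_carrier[OF subfieldE(3)[OF K], of xs] by auto
  then have "finite_dimension K (carrier R)"
    using Span_finite_dimension[OF K, of xs] xs by simp
  then show ?thesis
    using subalbegra_incl_imp_finite_dimension[OF K _ V] subalgebra_in_carrier[OF V] by blast
qed

lemma dim_mono:
  assumes K: "subfield K R" and E: "finite_dimension K E" and V: "subalgebra K V R" and "V \<subseteq> E"
  shows "dim K V \<le> dim K E"
proof -
  have "dimension (dim K V) K V"
    using finite_dimensionE[OF K subalbegra_incl_imp_finite_dimension[OF K E V \<open>V \<subseteq> E\<close>]]
    by (simp add: over_def)
  then obtain Vs where "independent K Vs" "length Vs = dim K V" "Span K Vs = V"
    using exists_base[OF K] by blast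
  moreover have "set Vs \<subseteq> V"
    using Span_base_incl[OF K] independent_in_carrier calculation by blast
  then have "length Vs \<le> (dim over K) E"
    using independent_length_le_dimension[OF K finite_dimensionE[OF K E]] \<open>V \<subseteq> E\<close> calculation
    by blast
  with calculation show ?thesis
    by (simp add: over_def)
qed

lemma Span_singleton_eq: "x \<in> carrier R \<Longrightarrow> K \<subseteq> carrier R \<Longrightarrow> Span K [x] = {k \<otimes> x | k. k \<in> K}"
  by (auto simp: line_extension_mem_iff subset_iff)

lemma dim_Span_singleton:
  assumes "subfield K R" and "x \<in> carrier R" and "x \<noteq> \<zero>"
  shows "dim K (Span K [x]) = 1"
proof -
  have "independent K [x]"
    using assms by (intro independent.li_Cons) auto
  then have "dimension 1 K (Span K [x])"
    using dimension_independent[of K "[x]"] by simp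
  then show ?thesis
    using dimI[OF assms(1)] by (simp add: over_def)
qed

end

context cring
begin

lemma scale_set_subalgebra:
  assumes W: "subalgebra K W R" and "K \<subseteq> carrier R" and "\<alpha> \<in> carrier R"
  shows "subalgebra K (scale_set \<alpha> W) R"
proof (rule subalgebraI)
  note W' = subalgebra_props[OF W]
  show "scale_set \<alpha> W \<subseteq> carrier R" and "\<zero> \<in> scale_set \<alpha> W"
    using W'(1,2) assms(3) by (force simp: scale_set_def)+
  show "x \<oplus> y \<in> scale_set \<alpha> W" if "x \<in> scale_set \<alpha> W" "y \<in> scale_set \<alpha> W" for x y
    using that W'(1,3) assms(3) by (auto simp: scale_set_def r_distr[symmetric] subset_iff)
  show "\<ominus> x \<in> scale_set \<alpha> W" if "x \<in> scale_set \<alpha> W" for x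
    using that W'(1,4) assms(3) by (auto simp: scale_set_def r_minus[symmetric] subset_iff)
  show "k \<otimes> x \<in> scale_set \<alpha> W" if "k \<in> K" "x \<in> scale_set \<alpha> W" for k x
    using that W'(1,5) assms(2,3) by (auto simp: scale_set_def m_lcomm subset_iff)
qed

lemma proportional_decompositions:
  assumes K: "subfield K R" and U: "subalgebra K U R" and V: "subalgebra K V R"
    and UV: "U \<inter> V = {\<zero>}" and direct: "direct_sum3 K (U <+> V) (prod_space K U V)"
    and "\<alpha> \<in> carrier R"
    and mem: "a\<^sub>0 \<in> K" "b\<^sub>0 \<in> K" "a \<in> K" "b \<in> K" "u\<^sub>0 \<in> U" "u \<in> U" "v\<^sub>0 \<in> V" "v \<in> V"
    and e\<^sub>0: "a\<^sub>0 \<oplus> u\<^sub>0 = \<alpha> \<otimes> (b\<^sub>0 \<oplus> v\<^sub>0)" and e: "a \<oplus> u = \<alpha> \<otimes> (b \<oplus> v)"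
  shows "a\<^sub>0 \<otimes> b = a \<otimes> b\<^sub>0" and "b\<^sub>0 \<otimes> u = b \<otimes> u\<^sub>0" and "a\<^sub>0 \<otimes> v = a \<otimes> v\<^sub>0"
proof -
  note U' = subalgebra_props[OF U] and V' = subalgebra_props[OF V]
    and Ks = subringE[OF subfieldE(1)[OF K]]
  have c: "a\<^sub>0 \<in> carrier R" "b\<^sub>0 \<in> carrier R" "a \<in> carrier R" "b \<in> carrier R"
     "u\<^sub>0 \<in> carrier R" "u \<in> carrier R" "v\<^sub>0 \<in> carrier R" "v \<in> carrier R"
    using mem Ks(1) U'(1) V'(1) by auto
  define k where "k = a\<^sub>0 \<otimes> b \<ominus> a \<otimes> b\<^sub>0"
  define w\<^sub>U where "w\<^sub>U = b \<otimes> u\<^sub>0 \<ominus> b\<^sub>0 \<otimes> u"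
  define w\<^sub>V where "w\<^sub>V = a\<^sub>0 \<otimes> v \<ominus> a \<otimes> v\<^sub>0"
  define p where "p = u\<^sub>0 \<otimes> v \<ominus> u \<otimes> v\<^sub>0"
  have "k \<oplus> (w\<^sub>U \<oplus> w\<^sub>V) \<oplus> p = (a\<^sub>0 \<oplus> u\<^sub>0) \<otimes> (b \<oplus> v) \<ominus> (a \<oplus> u) \<otimes> (b\<^sub>0 \<oplus> v\<^sub>0)"
    unfolding k_def w\<^sub>U_def w\<^sub>V_def p_def using c by algebra
  also have "\<dots> = \<zero>"
    unfolding e\<^sub>0 e using c \<open>\<alpha> \<in> carrier R\<close> by algebra
  finally have sum_zero: "k \<oplus> (w\<^sub>U \<oplus> w\<^sub>V) \<oplus> p = \<zero>" .
  have "k \<in> K"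
    unfolding k_def minus_eq using mem Ks by auto
  moreover have "w\<^sub>U \<in> U" and "w\<^sub>V \<in> V"
    unfolding w\<^sub>U_def w\<^sub>V_def minus_eq using mem U' V' by auto
  moreover have "p \<in> prod_space K U V"
    unfolding p_def minus_eq
    using subalgebra_props[OF prod_space_subalgebra[OF K U'(1) V'(1)]] prod_space_mem[OF K U'(1) V'(1)] mem
    by auto
  moreover have "w\<^sub>U \<oplus> w\<^sub>V \<in> U <+> V"
    using calculation by (auto simp: set_add_mem_iff)
  ultimately have k_zero: "k = \<zero>" and w_sum_zero: "w\<^sub>U \<oplus> w\<^sub>V = \<zero>"
    using direct sum_zero unfolding direct_sum3_def by blast+
  then have "w\<^sub>U = \<ominus> w\<^sub>V"
    using \<open>w\<^sub>U \<in> U\<close> \<open>w\<^sub>V \<in> V\<close> U'(1) V'(1) by (auto intro: minus_equality[symmetric])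
  then have w\<^sub>U_zero: "w\<^sub>U = \<zero>"
    using UV \<open>w\<^sub>U \<in> U\<close> \<open>w\<^sub>V \<in> V\<close> V'(4) by auto
  with w_sum_zero have w\<^sub>V_zero: "w\<^sub>V = \<zero>"
    using \<open>w\<^sub>V \<in> V\<close> V'(1) by auto
  show "a\<^sub>0 \<otimes> b = a \<otimes> b\<^sub>0" and "b\<^sub>0 \<otimes> u = b \<otimes> u\<^sub>0" and "a\<^sub>0 \<otimes> v = a \<otimes> v\<^sub>0"
    using k_zero w\<^sub>U_zero w\<^sub>V_zero c unfolding k_def w\<^sub>U_def w\<^sub>V_def by (simp_all add: m_comm)
qed

end

context field
begin

lemma cross_eq_imp_quotient_mult:
  assumes "k\<^sub>0 \<in> carrier R - {\<zero>}" and "k \<in> carrier R" and "w \<in> carrier R" and "w\<^sub>0 \<in> carrier R"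
    and "k\<^sub>0 \<otimes> w = k \<otimes> w\<^sub>0"
  shows "w = (k \<otimes> inv k\<^sub>0) \<otimes> w\<^sub>0"
proof -
  have inv: "inv k\<^sub>0 \<in> carrier R" "inv k\<^sub>0 \<otimes> k\<^sub>0 = \<one>"
    using assms(1) field_Units by auto
  have "w = inv k\<^sub>0 \<otimes> (k\<^sub>0 \<otimes> w)"
    using inv assms(1,3) by (simp add: m_assoc[symmetric])
  also have "\<dots> = inv k\<^sub>0 \<otimes> (k \<otimes> w\<^sub>0)"
    using assms(5) by simp
  also have "\<dots> = (k \<otimes> inv k\<^sub>0) \<otimes> w\<^sub>0"
    using inv assms by (simp add: m_ac)
  finally show ?thesis .
qed

lemma intersection_memE:
  assumes "x \<in> (K <+> U) \<inter> scale_set \<alpha> (K <+> V)"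
  obtains a u b v where "a \<in> K" "u \<in> U" "b \<in> K" "v \<in> V" "x = a \<oplus> u" "x = \<alpha> \<otimes> (b \<oplus> v)"
  using assms by (auto simp: set_add_mem_iff scale_set_def)

lemma intersection_subset_Span_singleton:
  assumes K: "subfield K R" and U: "subalgebra K U R" and V: "subalgebra K V R"
    and UV: "U \<inter> V = {\<zero>}" and direct: "direct_sum3 K (U <+> V) (prod_space K U V)"
    and \<alpha>: "\<alpha> \<in> carrier R"
    and x\<^sub>0: "x\<^sub>0 \<in> (K <+> U) \<inter> scale_set \<alpha> (K <+> V)" and x\<^sub>0_notin: "x\<^sub>0 \<notin> U \<inter> scale_set \<alpha> V"
  shows "(K <+> U) \<inter> scale_set \<alpha> (K <+> V) \<subseteq> Span K [x\<^sub>0]"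
proof
  fix y assume y: "y \<in> (K <+> U) \<inter> scale_set \<alpha> (K <+> V)"
  note Ks = subringE[OF subfieldE(1)[OF K]]
    and U' = subalgebra_props[OF U] and V' = subalgebra_props[OF V]
  obtain a\<^sub>0 u\<^sub>0 b\<^sub>0 v\<^sub>0 where mem\<^sub>0: "a\<^sub>0 \<in> K" "u\<^sub>0 \<in> U" "b\<^sub>0 \<in> K" "v\<^sub>0 \<in> V"
    and x\<^sub>0_U: "x\<^sub>0 = a\<^sub>0 \<oplus> u\<^sub>0" and x\<^sub>0_V: "x\<^sub>0 = \<alpha> \<otimes> (b\<^sub>0 \<oplus> v\<^sub>0)"
    using x\<^sub>0 by (rule intersection_memE)
  obtain a u b v where mem: "a \<in> K" "u \<in> U" "b \<in> K" "v \<in> V"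
    and y_U: "y = a \<oplus> u" and y_V: "y = \<alpha> \<otimes> (b \<oplus> v)"
    using y by (rule intersection_memE)
  have c: "a\<^sub>0 \<in> carrier R" "u\<^sub>0 \<in> carrier R" "b\<^sub>0 \<in> carrier R" "v\<^sub>0 \<in> carrier R"
    "a \<in> carrier R" "u \<in> carrier R" "b \<in> carrier R" "v \<in> carrier R"
    using mem\<^sub>0 mem Ks(1) U'(1) V'(1) by auto
  note rel = proportional_decompositions[OF K U V UV direct \<alpha> mem\<^sub>0(1,3) mem(1,3)
      mem\<^sub>0(2) mem(2) mem\<^sub>0(4) mem(4) x\<^sub>0_U[symmetric, unfolded x\<^sub>0_V] y_U[symmetric, unfolded y_V]]
  have quotient_in_K: "k \<otimes> inv k\<^sub>0 \<in> K" if "k \<in> K" "k\<^sub>0 \<in> K - {\<zero>}" for k k\<^sub>0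
    using that Ks(6) subfield_m_inv(1)[OF K] by blast
  have "a\<^sub>0 \<noteq> \<zero> \<or> b\<^sub>0 \<noteq> \<zero>"
  proof (rule ccontr)
    assume "\<not> ?thesis"
    then have "x\<^sub>0 = u\<^sub>0" and "x\<^sub>0 = \<alpha> \<otimes> v\<^sub>0"
      using x\<^sub>0_U x\<^sub>0_V c by auto
    with x\<^sub>0_notin mem\<^sub>0(2,4) show False
      by (auto simp: scale_set_def)
  qed
  then obtain \<mu> where "\<mu> \<in> K" and "y = \<mu> \<otimes> x\<^sub>0"
  proof
    assume "b\<^sub>0 \<noteq> \<zero>"
    define \<mu> where "\<mu> = b \<otimes> inv b\<^sub>0"
    have "b\<^sub>0 \<otimes> a = b \<otimes> a\<^sub>0"
      using rel(1) c by (simp add: m_comm)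
    then have "a = \<mu> \<otimes> a\<^sub>0" and "u = \<mu> \<otimes> u\<^sub>0"
      unfolding \<mu>_def using rel(2) c \<open>b\<^sub>0 \<noteq> \<zero>\<close> by (auto intro: cross_eq_imp_quotient_mult)
    moreover have "\<mu> \<in> K"
      unfolding \<mu>_def using mem\<^sub>0 mem \<open>b\<^sub>0 \<noteq> \<zero>\<close> by (auto intro: quotient_in_K)
    moreover from this have "y = \<mu> \<otimes> x\<^sub>0"
      unfolding y_U x\<^sub>0_U calculation(1,2) using c Ks(1) by (auto simp: r_distr)
    ultimately show thesis
      using that by blast
  next
    assume "a\<^sub>0 \<noteq> \<zero>"
    define \<mu> where "\<mu> = a \<otimes> inv a\<^sub>0"
    have "b = \<mu> \<otimes> b\<^sub>0" and "v = \<mu> \<otimes> v\<^sub>0"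
      unfolding \<mu>_def using rel(1,3) c \<open>a\<^sub>0 \<noteq> \<zero>\<close> by (auto intro: cross_eq_imp_quotient_mult)
    moreover have "\<mu> \<in> K"
      unfolding \<mu>_def using mem\<^sub>0 mem \<open>a\<^sub>0 \<noteq> \<zero>\<close> by (auto intro: quotient_in_K)
    moreover from this have "y = \<mu> \<otimes> x\<^sub>0"
      unfolding y_V x\<^sub>0_V calculation(1,2) using c \<alpha> Ks(1) by (auto simp: r_distr m_lcomm)
    ultimately show thesis
      using that by blast
  qed
  then show "y \<in> Span K [x\<^sub>0]"
    using Span_singleton_eq[of x\<^sub>0 K] c Ks(1) x\<^sub>0_U by auto
qed

lemma dim_intersection_le_one:
  assumes K: "subfield K R" and "finite (carrier R)"
    and U: "subalgebra K U R" and V: "subalgebra K V R"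
    and UV: "U \<inter> V = {\<zero>}" and direct: "direct_sum3 K (U <+> V) (prod_space K U V)"
    and \<alpha>: "\<alpha> \<in> carrier R" and dim_T: "dim K (U \<inter> scale_set \<alpha> V) \<le> 1"
  shows "dim K ((K <+> U) \<inter> scale_set \<alpha> (K <+> V)) \<le> 1"
proof -
  let ?S = "(K <+> U) \<inter> scale_set \<alpha> (K <+> V)" and ?T = "U \<inter> scale_set \<alpha> V"
  have Kc: "K \<subseteq> carrier R"
    using subfieldE(3)[OF K] .
  have S: "subalgebra K ?S R"
    using subalgebra_set_add[OF Kc subfield_is_subalgebra[OF K]] scale_set_subalgebra Kc U V \<alpha>
    by (auto intro!: subalgebra_inter)
  have T: "subalgebra K ?T R"
    using scale_set_subalgebra[OF V Kc] U \<alpha> by (auto intro!: subalgebra_inter)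
  show ?thesis
  proof (cases "?S \<subseteq> ?T")
    case True
    then have "dim K ?S \<le> dim K ?T"
      using dim_mono[OF K finite_carrier_subalgebra_finite_dimension[OF K assms(2) T] S] by blast
    with dim_T show ?thesis
      by linarith
  next
    case False
    then obtain x\<^sub>0 where "x\<^sub>0 \<in> ?S" and "x\<^sub>0 \<notin> ?T"
      by blast
    then have x\<^sub>0_line: "?S \<subseteq> Span K [x\<^sub>0]"
      using intersection_subset_Span_singleton[OF K U V UV direct \<alpha>] by blast
    have "x\<^sub>0 \<in> carrier R" and "x\<^sub>0 \<noteq> \<zero>"
      using \<open>x\<^sub>0 \<in> ?S\<close> \<open>x\<^sub>0 \<notin> ?T\<close> subalgebra_props(1,2)[OF T] subalgebra_in_carrier[OF S] by auto
    then have "dim K ?S \<le> dim K (Span K [x\<^sub>0])"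
      using dim_mono[OF K Span_finite_dimension[OF K] S x\<^sub>0_line] by simp
    also have "\<dots> = 1"
      using dim_Span_singleton[OF K \<open>x\<^sub>0 \<in> carrier R\<close> \<open>x\<^sub>0 \<noteq> \<zero>\<close>] .
    finally show ?thesis .
  qed
qed

end

theorem lemma3p9:
  fixes R :: "('a, 'b) ring_scheme" (structure)
    and K U V :: "'a set" and q n :: nat
  assumes "field R" and "finite (carrier R)"
    and "subfield K R" and "card K = q" and "card (carrier R) = q ^ n" and "n > 0"
    and "subalgebra K U R" and "subalgebra K V R" and "U \<noteq> V"
    and "U \<inter> V = {\<zero>}"
    and "\<forall>\<alpha>\<in>carrier R - {\<zero>}. ring.dim R K (U \<inter> ring.scale_set R \<alpha> V) \<le> 1"
    and "ring.direct_sum3 R K (U <+> V) (ring.prod_space R K U V)"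
  shows "\<forall>\<alpha>\<in>carrier R - {\<zero>}.
           ring.dim R K ((K <+> U) \<inter> ring.scale_set R \<alpha> (K <+> V)) \<le> 1"
proof
  interpret field R by fact
  fix \<alpha> assume "\<alpha> \<in> carrier R - {\<zero>}"
  then show "dim K ((K <+> U) \<inter> scale_set \<alpha> (K <+> V)) \<le> 1"
    using dim_intersection_le_one[OF assms(3,2,7,8,10,12)] assms(11) by blast
qed

end
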